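(* Let $p\ge1$, $\phi_1,\dots,\phi_p:\mathbb Z\to\mathbb C$ and integers $t>s$. Then $F_{t,s}=\Gamma_t\Gamma_{t-1}\cdots\Gamma_{s+1}$ is the $p\times p$ matrix whose $(i,m)$ entry is $\xi^{(m)}_{t-i+1,s}$, for $1\le i,m\le p$.
   Context: $\Gamma_t$ is the $p\times p$ companion matrix with first row $(\phi_1(t),\dots,\phi_p(t))$, entries $(i,i-1)$ equal to $1$ for $2\le i\le p$, and all other entries $0$. Convention: $\phi_l(t)=0$ for $l>p$. For integers $t>s$ and $1\le m\le p$, $\Phi^{(m)}_{t,s}$ is the $(t-s)\times(t-s)$ lower Hessenberg matrix whose $(i,j)$ entry is: $\phi_{m+i-1}(s+i)$ if $j=1$; $-1$ if $j=i+1$; $\phi_{i-j+1}(s+i)$ if $2\le j\le i$; $0$ if $j>i+1$. For $t\ge s-p+1$: $\xi^{(m)}_{t,s}=\det\Phi^{(m)}_{t,s}$ if $t>s$; $\xi^{(m)}_{t,s}=1$ if $t=s-m+1$; $\xi^{(m)}_{t,s}=0$ if $s-p+1\le t\le s$, $t\ne s-m+1$. *)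

theory Defs
  imports "Jordan_Normal_Form.Determinant"
begin

definition phic :: "nat \<Rightarrow> (nat \<Rightarrow> int \<Rightarrow> complex) \<Rightarrow> nat \<Rightarrow> int \<Rightarrow> complex" where
  "phic p phi l t = (if 1 \<le> l \<and> l \<le> p then phi l t else 0)"

text \<open>Companion matrix Gamma_t (0-based indices: entry (i,j) is paper entry (i+1,j+1)).\<close>
definition Gamma :: "nat \<Rightarrow> (nat \<Rightarrow> int \<Rightarrow> complex) \<Rightarrow> int \<Rightarrow> complex mat" where
  "Gamma p phi t = mat p p (\<lambda>(i,j). if i = 0 then phic p phi (j+1) t
                                     else if i = j + 1 then 1 else 0)"

fun Gprod :: "nat \<Rightarrow> (nat \<Rightarrow> int \<Rightarrow> complex) \<Rightarrow> int \<Rightarrow> nat \<Rightarrow> complex mat" where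
  "Gprod p phi s 0 = 1\<^sub>m p"
| "Gprod p phi s (Suc n) = Gamma p phi (s + int (Suc n)) * Gprod p phi s n"

definition F :: "nat \<Rightarrow> (nat \<Rightarrow> int \<Rightarrow> complex) \<Rightarrow> int \<Rightarrow> int \<Rightarrow> complex mat" where
  "F p phi t s = Gprod p phi s (nat (t - s))"

text \<open>Hessenberg matrix Phi^{(m)}_{t,s}, of size (t-s)x(t-s); 0-based entry (i,j) is paper entry (i+1,j+1).\<close>
definition PhiH :: "nat \<Rightarrow> (nat \<Rightarrow> int \<Rightarrow> complex) \<Rightarrow> nat \<Rightarrow> int \<Rightarrow> int \<Rightarrow> complex mat" where
  "PhiH p phi m t s = mat (nat (t - s)) (nat (t - s)) (\<lambda>(i0,j0).
      let i = i0 + 1; j = j0 + 1 in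
      if j = 1 then phic p phi (m + i - 1) (s + int i)
      else if j = i + 1 then -1
      else if 2 \<le> j \<and> j \<le> i then phic p phi (i - j + 1) (s + int i)
      else 0)"

definition xi :: "nat \<Rightarrow> (nat \<Rightarrow> int \<Rightarrow> complex) \<Rightarrow> nat \<Rightarrow> int \<Rightarrow> int \<Rightarrow> complex" where
  "xi p phi m t s = (if t > s then det (PhiH p phi m t s)
                     else if t = s - int m + 1 then 1 else 0)"

end

theory Submission
  imports Defs
begin

text \<open>Expanding the lower Hessenberg determinant along its last row shows that, for fixed
  m and s, the numbers xi(m)(t, s) with t > s satisfy the recurrence
  xi(t) = phi_1(t) xi(t-1) + ... + phi_p(t) xi(t-p), while their values for s - p < t \<le> s are
  the entries of the identity matrix. Left multiplication by Gamma_t applies this recurrence to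
  the first row and shifts the other rows down, so the claim follows by induction on t - s.\<close>

definition leading_submat :: "'a mat \<Rightarrow> nat \<Rightarrow> 'a mat" where
  "leading_submat A k = mat k k (\<lambda>(i, j). A $$ (i, j))"

lemma det_lower_hessenberg_last_row:
  fixes A :: "'a :: comm_ring_1 mat"
  assumes "A \<in> carrier_mat (Suc n) (Suc n)"
    and "\<And>i. i < n \<Longrightarrow> A $$ (i, Suc i) = -1"
    and "\<And>i j. j < Suc n \<Longrightarrow> Suc i < j \<Longrightarrow> A $$ (i, j) = 0"
  shows "det A = (\<Sum>j<Suc n. A $$ (n, j) * det (leading_submat A j))"
  using assms
proof (induction n arbitrary: A)
  case 0
  have "det A = A $$ (0, 0) * cofactor A 0 0"
    using laplace_expansion_column[OF 0(1)] by simp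
  also have "cofactor A 0 0 = 1"
    using mat_delete_carrier[OF 0(1), of 0 0] by (simp add: cofactor_def)
  finally show ?case by (simp add: leading_submat_def)
next
  case (Suc n)
  let ?B = "mat_delete A n (Suc n)"
  have B: "?B \<in> carrier_mat (Suc n) (Suc n)"
    using mat_delete_carrier[OF Suc(2)] by simp
  have det_B: "det ?B = (\<Sum>j<Suc n. ?B $$ (n, j) * det (leading_submat ?B j))"
    by (rule Suc.IH[OF B]) (use Suc(2-4) in \<open>simp_all add: mat_delete_def\<close>)
  have leading_B: "leading_submat ?B j = leading_submat A j" if "j < Suc n" for j
    unfolding leading_submat_def
    by (rule eq_matI) (use that Suc(2) in \<open>auto simp: mat_delete_def\<close>)
  have row_B: "?B $$ (n, j) = A $$ (Suc n, j)" if "j < Suc n" for j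
    using that Suc(2) by (simp add: mat_delete_def)
  have leading_A: "leading_submat A (Suc n) = mat_delete A (Suc n) (Suc n)"
    unfolding leading_submat_def
    by (rule eq_matI) (use Suc(2) in \<open>auto simp: mat_delete_def\<close>)
  \<comment> \<open>only the last two entries of the last column can be nonzero\<close>
  have "det A = (\<Sum>i<Suc (Suc n). A $$ (i, Suc n) * cofactor A i (Suc n))"
    using laplace_expansion_column[OF Suc(2)] by simp
  also have "\<dots> = A $$ (n, Suc n) * cofactor A n (Suc n)
                 + A $$ (Suc n, Suc n) * cofactor A (Suc n) (Suc n)"
    using Suc(4) by simp
  also have "\<dots> = det ?B + A $$ (Suc n, Suc n) * det (leading_submat A (Suc n))"
    using Suc(3) by (simp add: cofactor_def leading_A)
  also have "det ?B = (\<Sum>j<Suc n. A $$ (Suc n, j) * det (leading_submat A j))"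
    unfolding det_B by (rule sum.cong) (simp_all add: row_B leading_B)
  finally show ?case by simp
qed

lemma PhiH_carrier: "PhiH p phi m t s \<in> carrier_mat (nat (t - s)) (nat (t - s))"
  by (simp add: PhiH_def)

lemma leading_submat_PhiH:
  assumes "j \<le> nat (t - s)"
  shows "leading_submat (PhiH p phi m t s) j = PhiH p phi m (s + int j) s"
  unfolding leading_submat_def
  by (rule eq_matI) (use assms in \<open>auto simp: PhiH_def Let_def\<close>)

lemma det_PhiH_last_row:
  assumes "t = s + int (Suc n)"
  shows "det (PhiH p phi m t s) = phic p phi (m + n) t
           + (\<Sum>l\<in>{1..n}. phic p phi l t * xi p phi m (t - int l) s)"
proof -
  define A where "A = PhiH p phi m t s"
  have size: "nat (t - s) = Suc n" using assms by simp
  have A: "A \<in> carrier_mat (Suc n) (Suc n)"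
    using PhiH_carrier size unfolding A_def by metis
  have "det A = (\<Sum>j<Suc n. A $$ (n, j) * det (leading_submat A j))"
    by (rule det_lower_hessenberg_last_row[OF A]) (simp_all add: A_def PhiH_def size)
  also have "\<dots> = A $$ (n, 0) * det (leading_submat A 0)
                 + (\<Sum>i<n. A $$ (n, Suc i) * det (leading_submat A (Suc i)))"
    by (rule sum.lessThan_Suc_shift)
  also have "A $$ (n, 0) * det (leading_submat A 0) = phic p phi (m + n) t"
    using assms by (simp add: A_def PhiH_def size leading_submat_def)
  also have "(\<Sum>i<n. A $$ (n, Suc i) * det (leading_submat A (Suc i)))
           = (\<Sum>i<n. phic p phi (n - i) t * xi p phi m (t - int (n - i)) s)"
  proof (rule sum.cong[OF refl])
    fix i assume i: "i \<in> {..<n}"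
    have "det (leading_submat A (Suc i)) = xi p phi m (t - int (n - i)) s"
      using i assms size by (simp add: A_def leading_submat_PhiH xi_def)
    moreover have "A $$ (n, Suc i) = phic p phi (n - i) t"
      using i assms by (simp add: A_def PhiH_def size Suc_diff_Suc)
    ultimately show "A $$ (n, Suc i) * det (leading_submat A (Suc i))
                   = phic p phi (n - i) t * xi p phi m (t - int (n - i)) s"
      by simp
  qed
  also have "\<dots> = (\<Sum>l\<in>{1..n}. phic p phi l t * xi p phi m (t - int l) s)"
    by (rule sum.reindex_bij_witness[of _ "\<lambda>l. n - l" "\<lambda>i. n - i"]) auto
  finally show ?thesis unfolding A_def .
qed

lemma xi_recurrence:
  assumes "t > s" and "m \<ge> 1"
  shows "xi p phi m t s = (\<Sum>k<p. phic p phi (Suc k) t * xi p phi m (t - 1 - int k) s)"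
proof -
  define g where "g l = phic p phi l t * xi p phi m (t - int l) s" for l
  obtain n where n: "t = s + int (Suc n)"
    using assms(1) by (metis zless_iff_Suc_zadd)
  \<comment> \<open>terms with \<open>l > n\<close> look back to \<open>t - l \<le> s\<close>, where \<open>\<xi>\<close> is an indicator picking \<open>l = n + m\<close>\<close>
  have tail: "(\<Sum>l\<in>{Suc n..Suc n + p}. g l) = phic p phi (m + n) t"
  proof -
    have "(\<Sum>l\<in>{Suc n..Suc n + p}. g l)
        = (\<Sum>l\<in>{Suc n..Suc n + p}. if l = m + n then phic p phi l t else 0)"
      by (rule sum.cong[OF refl]) (use n assms(2) in \<open>auto simp: g_def xi_def\<close>)
    also have "\<dots> = phic p phi (m + n) t"
      using assms(2) by (simp add: phic_def)
    finally show ?thesis .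
  qed
  have "(\<Sum>k<p. phic p phi (Suc k) t * xi p phi m (t - 1 - int k) s) = (\<Sum>l\<in>{1..p}. g l)"
    by (rule sum.reindex_bij_witness[of _ "\<lambda>l. l - 1" Suc]) (auto simp: g_def algebra_simps)
  also have "\<dots> = (\<Sum>l\<in>{1..Suc n + p}. g l)"
    by (rule sum.mono_neutral_left) (auto simp: g_def phic_def)
  also have "{1..Suc n + p} = {1..n} \<union> {Suc n..Suc n + p}" by auto
  also have "sum g \<dots> = (\<Sum>l\<in>{1..n}. g l) + (\<Sum>l\<in>{Suc n..Suc n + p}. g l)"
    by (rule sum.union_disjoint) auto
  also have "\<dots> = xi p phi m t s"
    unfolding tail using assms(1) by (simp add: xi_def det_PhiH_last_row[OF n] g_def)
  finally show ?thesis ..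
qed

lemma Gprod_eq_xi_mat:
  "Gprod p phi s n = mat p p (\<lambda>(i, m). xi p phi (m + 1) (s + int n - int i) s)"
proof (induction n)
  case 0
  show ?case by (rule eq_matI) (auto simp: xi_def)
next
  case (Suc n)
  let ?t = "s + int (Suc n)"
  have "Gprod p phi s (Suc n) $$ (i, m) = xi p phi (m + 1) (?t - int i) s"
    if i: "i < p" and m: "m < p" for i m
  proof -
    have "Gprod p phi s (Suc n) $$ (i, m)
        = (\<Sum>k<p. Gamma p phi ?t $$ (i, k) * xi p phi (m + 1) (?t - 1 - int k) s)"
      using i m by (simp add: Suc.IH Gamma_def scalar_prod_def lessThan_atLeast0 algebra_simps)
    also have "\<dots> = xi p phi (m + 1) (?t - int i) s"
    proof (cases i)
      case 0
      have "xi p phi (m + 1) ?t s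
          = (\<Sum>k<p. phic p phi (Suc k) ?t * xi p phi (m + 1) (?t - 1 - int k) s)"
        by (rule xi_recurrence) simp_all
      then show ?thesis using i 0 by (simp add: Gamma_def)
    next
      case (Suc i')
      have "(\<Sum>k<p. Gamma p phi ?t $$ (i, k) * xi p phi (m + 1) (?t - 1 - int k) s)
          = (\<Sum>k<p. if k = i' then xi p phi (m + 1) (?t - 1 - int k) s else 0)"
        by (rule sum.cong[OF refl]) (use i Suc in \<open>auto simp: Gamma_def\<close>)
      then show ?thesis using i Suc by (simp add: algebra_simps)
    qed
    finally show ?thesis .
  qed
  then show ?case
    by (intro eq_matI) (auto simp: Gamma_def Suc.IH)
qed

theorem corollary2:
  fixes p :: nat and phi :: "nat \<Rightarrow> int \<Rightarrow> complex" and t s :: int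
  assumes "p \<ge> 1" and "t > s"
  shows "F p phi t s = mat p p (\<lambda>(i, m). xi p phi (m + 1) (t - int i) s)"
  using assms(2) by (simp add: F_def Gprod_eq_xi_mat)

end
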